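(* For every integer $m \geq 1$, the clique number of the graph $\mathrm{Cay}(\tau_m)$ is at least $2^m$.
   Context: Identify $\mathbb{Z}_2^{2m}$ with the integers $0,\dots,4^m-1$ via binary representation, so each $i \in \mathbb{Z}_2^{2m}$ has a base-4 representation with $m$ digits (each base-4 digit being a consecutive pair of bits). Define $\tau_m:\mathbb{Z}_2^{2m}\to\mathbb{Z}_2$ by $\tau_m(i)=1$ if and only if the number of base-4 digits of $i$ equal to $1$ or $2$ is nonzero and the number of base-4 digits of $i$ equal to $1$ is even. The Cayley graph $\mathrm{Cay}(\tau_m)$ is the simple undirected graph with vertex set $\mathbb{Z}_2^{2m}$ in which distinct $i,j$ are adjacent if and only if $\tau_m(i+j)=1$. *)

theory Defs
  imports Main
begin

text \<open>Elements of Z_2^(2m) are identified with the naturals 0..4^m-1 via binary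
representation; group addition is bitwise exclusive or.\<close>

definition digit4 :: "nat \<Rightarrow> nat \<Rightarrow> nat" where
  "digit4 i k = (i div 4 ^ k) mod 4"

definition tau :: "nat \<Rightarrow> nat \<Rightarrow> bool" where
  "tau m i \<longleftrightarrow>
     card {k. k < m \<and> digit4 i k \<in> {1, 2}} \<noteq> 0 \<and>
     even (card {k. k < m \<and> digit4 i k = 1})"

definition cay_adj :: "nat \<Rightarrow> nat \<Rightarrow> nat \<Rightarrow> bool" where
  "cay_adj m i j \<longleftrightarrow> i \<noteq> j \<and> tau m (xor i j)"

definition is_clique :: "nat \<Rightarrow> nat set \<Rightarrow> bool" where
  "is_clique m S \<longleftrightarrow> S \<subseteq> {..<4 ^ m} \<and>
     (\<forall>i\<in>S. \<forall>j\<in>S. i \<noteq> j \<longrightarrow> cay_adj m i j)"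

definition clique_number :: "nat \<Rightarrow> nat" where
  "clique_number m = Max (card ` {S. is_clique m S})"

end

theory Submission
  imports Defs
begin

text \<open>The \<open>2^m\<close> numbers below \<open>4^m\<close> whose base-4 digits all lie in \<open>{0, 2}\<close> form a clique.
  The xor of two distinct such numbers again has only digits 0 and 2, and at least one digit 2:
  it has zero (an even number of) digits 1 and a nonzero number of digits in \<open>{1, 2}\<close>, so \<open>\<tau>_m\<close>
  holds for it.\<close>

lemma digit4_eq_take_bit_drop_bit: "digit4 n k = take_bit 2 (drop_bit (2 * k) n)"
  by (simp add: digit4_def take_bit_eq_mod drop_bit_eq_div power_mult)

lemma digit4_xor: "digit4 (xor i j) k = xor (digit4 i k) (digit4 j k)"
  by (simp add: digit4_eq_take_bit_drop_bit take_bit_xor drop_bit_xor)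

lemma digit4_0: "digit4 i 0 = i mod 4"
  by (simp add: digit4_def)

lemma digit4_Suc: "digit4 i (Suc k) = digit4 (i div 4) k"
  by (simp add: digit4_def div_mult2_eq)

lemma exists_digit4_neq:
  "i < 4 ^ m \<Longrightarrow> j < 4 ^ m \<Longrightarrow> i \<noteq> j \<Longrightarrow> \<exists>k<m. digit4 i k \<noteq> digit4 j k"
proof (induction m arbitrary: i j)
  case 0
  then show ?case by simp
next
  case (Suc m)
  show ?case
  proof (cases "i mod 4 = j mod 4")
    case False
    then show ?thesis by (intro exI[of _ 0]) (simp add: digit4_0)
  next
    case True
    with Suc.prems(3) have "i div 4 \<noteq> j div 4"
      by (metis div_mult_mod_eq)
    moreover have "i div 4 < 4 ^ m" "j div 4 < 4 ^ m"
      using Suc.prems(1,2) by (simp_all add: less_mult_imp_div_less mult.commute)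
    ultimately obtain k where "k < m" "digit4 (i div 4) k \<noteq> digit4 (j div 4) k"
      using Suc.IH by blast
    then show ?thesis by (intro exI[of _ "Suc k"]) (simp add: digit4_Suc)
  qed
qed

lemma tau_if_digits_0_2:
  assumes digits: "\<forall>k<m. digit4 x k \<in> {0, 2}"
    and two: "k < m" "digit4 x k = 2"
  shows "tau m x"
proof -
  have "k \<in> {k. k < m \<and> digit4 x k \<in> {1, 2}}"
    using two by simp
  then have "card {k. k < m \<and> digit4 x k \<in> {1, 2}} \<noteq> 0"
    by (metis card_0_eq empty_iff finite_Collect_less_nat finite_Collect_conjI)
  moreover have "card {k. k < m \<and> digit4 x k = 1} = 0"
    using digits by fastforce
  ultimately show ?thesis
    unfolding tau_def by (metis even_zero)
qed

fun digits_0_2 :: "nat \<Rightarrow> nat set" where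
  "digits_0_2 0 = {0}"
| "digits_0_2 (Suc m) = (\<lambda>x. 4 * x) ` digits_0_2 m \<union> (\<lambda>x. 4 * x + 2) ` digits_0_2 m"

lemma finite_digits_0_2: "finite (digits_0_2 m)"
  by (induction m) auto

lemma card_digits_0_2: "card (digits_0_2 m) = 2 ^ m"
proof (induction m)
  case 0
  then show ?case by simp
next
  case (Suc m)
  have "(\<lambda>x. 4 * x) ` digits_0_2 m \<inter> (\<lambda>x. 4 * x + 2) ` digits_0_2 m = {}"
    by auto presburger
  moreover have "inj_on (\<lambda>x::nat. 4 * x) (digits_0_2 m)" "inj_on (\<lambda>x::nat. 4 * x + 2) (digits_0_2 m)"
    by (auto simp: inj_on_def)
  ultimately show ?case
    using Suc.IH finite_digits_0_2 by (simp add: card_Un_disjoint card_image)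
qed

lemma digits_0_2_less: "x \<in> digits_0_2 m \<Longrightarrow> x < 4 ^ m"
proof (induction m arbitrary: x)
  case (Suc m)
  then obtain y where "y < 4 ^ m" "x \<le> 4 * y + 2"
    by fastforce
  then show ?case by simp
qed simp

lemma digit4_digits_0_2: "x \<in> digits_0_2 m \<Longrightarrow> k < m \<Longrightarrow> digit4 x k \<in> {0, 2}"
proof (induction m arbitrary: x k)
  case 0
  then show ?case by simp
next
  case (Suc m)
  obtain y where y: "y \<in> digits_0_2 m" and "x = 4 * y \<or> x = 4 * y + 2"
    using Suc.prems(1) by auto
  then have "x div 4 = y" "x mod 4 = 0 \<or> x mod 4 = 2"
    by presburger+
  then show ?case
    using Suc.IH[OF y] Suc.prems(2) by (cases k) (auto simp: digit4_Suc digit4_0)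
qed

lemma is_clique_digits_0_2: "is_clique m (digits_0_2 m)"
  unfolding is_clique_def
proof (intro conjI ballI impI)
  show "digits_0_2 m \<subseteq> {..<4 ^ m}"
    using digits_0_2_less by auto
next
  fix i j
  assume ij: "i \<in> digits_0_2 m" "j \<in> digits_0_2 m" "i \<noteq> j"
  obtain k where k: "k < m" "digit4 i k \<noteq> digit4 j k"
    using exists_digit4_neq digits_0_2_less ij by blast
  have "\<forall>k<m. digit4 (xor i j) k \<in> {0, 2}"
  proof (intro allI impI)
    fix k
    assume "k < m"
    then have "digit4 i k \<in> {0, 2}" "digit4 j k \<in> {0, 2}"
      using digit4_digits_0_2 ij by auto
    then show "digit4 (xor i j) k \<in> {0, 2}"
      by (auto simp: digit4_xor)
  qed
  moreover have "digit4 (xor i j) k = 2"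
    using digit4_digits_0_2[OF ij(1) k(1)] digit4_digits_0_2[OF ij(2) k(1)] k(2)
    by (auto simp: digit4_xor)
  ultimately show "cay_adj m i j"
    using tau_if_digits_0_2 k(1) ij(3) unfolding cay_adj_def by blast
qed

lemma card_le_clique_number: "is_clique m S \<Longrightarrow> card S \<le> clique_number m"
proof -
  assume "is_clique m S"
  have "{S. is_clique m S} \<subseteq> Pow {..<4 ^ m}"
    by (auto simp: is_clique_def)
  then have "finite (card ` {S. is_clique m S})"
    by (meson finite_Pow_iff finite_lessThan finite_subset finite_imageI)
  with \<open>is_clique m S\<close> show ?thesis
    unfolding clique_number_def by (simp add: Max_ge)
qed

theorem lemma4:
  fixes m :: nat
  assumes "m \<ge> 1"
  shows "clique_number m \<ge> 2 ^ m"
  using card_le_clique_number[OF is_clique_digits_0_2] by (simp add: card_digits_0_2)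

end
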